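(* Let $f:\mathbb{R}^n\to\mathbb{R}^n$ and $\mu\ge0$. Suppose that: (i) $f$ is continuous on $\mathbb{R}^n$; (ii) for every $x\in\mathbb{R}^n$, $f$ admits a strict $\eta_x$-estimator $g_x$ at $x$ (for some $\eta_x\ge0$) which is metrically injective around $x$ with $\operatorname{inj}(g_x,x)>\eta_x$; (iii) for every $x\in\mathbb{R}^n$, $f$ admits a strict $\mu$-estimator $h_x$ at $x$, and $$\sigma_f:=\inf_{x\in\mathbb{R}^n}\operatorname{lop}(h_x,x)>\mu.$$ Then $f$ is a bijection of $\mathbb{R}^n$ onto $\mathbb{R}^n$, and $f^{-1}:\mathbb{R}^n\to\mathbb{R}^n$ is Lipschitz continuous on $\mathbb{R}^n$ with constant $(\sigma_f-\mu)^{-1}$.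
   Context: $B(x,r)$ and $B^\circ(x,r)$ denote the closed and open balls. For a mapping $f:\mathbb{R}^n\to\mathbb{R}^m$, $\operatorname{lip}(f,\bar x)$ is the infimum of all $\ell>0$ for which there is a neighbourhood $U$ of $\bar x$ with $\|f(x_1)-f(x_2)\|\le\ell\|x_1-x_2\|$ for all $x_1,x_2\in U$ ($+\infty$ if none). Given $\mu\ge0$, $h:\mathbb{R}^n\to\mathbb{R}^m$ is a strict $\mu$-estimator of $f$ at $\bar x$ if $h(\bar x)=f(\bar x)$ and $\operatorname{lip}(f-h,\bar x)\le\mu$. A mapping $g$ is metrically injective around $\bar x$ if there exist $\beta,\delta>0$ with $\|g(x_1)-g(x_2)\|\ge\beta\|x_1-x_2\|$ for all $x_1,x_2\in B(\bar x,\delta)$; $\operatorname{inj}(g,\bar x)$ is the supremum of such $\beta$. The linear openness bound $\operatorname{lop}(h,\bar x)$ is the supremum of all $\alpha>0$ for which there exist neighbourhoods $U$ of $\bar x$ and $V$ of $h(\bar x)$ such that $B^\circ(h(x),\alpha r)\cap V\subseteq h(B^\circ(x,r))$ for all $x\in U$ and all $r>0$ (it is $0$ if no such $\alpha$ exists). *)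

theory Defs
  imports "HOL-Analysis.Analysis"
begin

text \<open>Lipschitz modulus lip(f, xb), valued in the extended reals (infinity if no such l).\<close>
definition lip_mod :: "('a::real_normed_vector \<Rightarrow> 'b::real_normed_vector) \<Rightarrow> 'a \<Rightarrow> ereal" where
  "lip_mod f xb = Inf (ereal ` {l. l > 0 \<and> (\<exists>U. open U \<and> xb \<in> U \<and>
      (\<forall>x1\<in>U. \<forall>x2\<in>U. norm (f x1 - f x2) \<le> l * norm (x1 - x2)))})"

definition strict_estimator ::
  "('a::real_normed_vector \<Rightarrow> 'b::real_normed_vector) \<Rightarrow> ('a \<Rightarrow> 'b) \<Rightarrow> real \<Rightarrow> 'a \<Rightarrow> bool" where
  "strict_estimator f h mu xb \<longleftrightarrow> h xb = f xb \<and> lip_mod (\<lambda>x. f x - h x) xb \<le> ereal mu"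

definition metrically_injective ::
  "('a::real_normed_vector \<Rightarrow> 'b::real_normed_vector) \<Rightarrow> 'a \<Rightarrow> bool" where
  "metrically_injective g xb \<longleftrightarrow> (\<exists>\<beta>>0. \<exists>\<delta>>0. \<forall>x1\<in>cball xb \<delta>. \<forall>x2\<in>cball xb \<delta>.
      norm (g x1 - g x2) \<ge> \<beta> * norm (x1 - x2))"

definition inj_bound :: "('a::real_normed_vector \<Rightarrow> 'b::real_normed_vector) \<Rightarrow> 'a \<Rightarrow> ereal" where
  "inj_bound g xb = Sup (ereal ` {\<beta>. \<beta> > 0 \<and> (\<exists>\<delta>>0. \<forall>x1\<in>cball xb \<delta>. \<forall>x2\<in>cball xb \<delta>.
      norm (g x1 - g x2) \<ge> \<beta> * norm (x1 - x2))})"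

definition lop :: "('a::real_normed_vector \<Rightarrow> 'b::real_normed_vector) \<Rightarrow> 'a \<Rightarrow> ereal" where
  "lop h xb = Sup (insert 0 (ereal ` {\<alpha>. \<alpha> > 0 \<and> (\<exists>U V. open U \<and> xb \<in> U \<and> open V \<and> h xb \<in> V \<and>
      (\<forall>x\<in>U. \<forall>r>0. ball (h x) (\<alpha> * r) \<inter> V \<subseteq> h ` ball x r))}))"

end

theory Submission
  imports Defs
begin

(* Graves' iteration turns the strict mu-estimator h_x, which is open at a linear rate close to
   sigma_f, into openness of f itself at every rate c < sigma_f - mu near each point. The
   eta-estimators make f locally injective, and a locally injective map that is open at rate c is
   locally c-expanding. By compactness both properties hold uniformly on balls, so the segment from
   f x to any y can be lifted through f in short steps: every y has a preimage within |y - f x| / c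
   of x. For injectivity, lift the segments ending at f a from all starting points on the segment
   from a to b: nearby starting points give lifts with the same end, so the constant lifts at a and
   at b end at the same point when f a = f b. Letting c tend to sigma_f - mu gives the Lipschitz
   constant of the inverse. *)

lemma strict_estimator_lipschitz_near:
  assumes "strict_estimator f h mu z" "mu < b"
  obtains l U where "0 < l" "l < b" "open U" "z \<in> U"
    "\<And>x1 x2. x1 \<in> U \<Longrightarrow> x2 \<in> U \<Longrightarrow>
       norm ((f x1 - h x1) - (f x2 - h x2)) \<le> l * norm (x1 - x2)"
proof -
  have "lip_mod (\<lambda>x. f x - h x) z < ereal b"
    using assms le_less_trans[of _ "ereal mu" "ereal b"] unfolding strict_estimator_def by simp
  then show ?thesis
    using that unfolding lip_mod_def Inf_less_iff by auto
qed

lemma inj_bound_greaterE: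
  assumes "ereal b < inj_bound g z"
  obtains \<beta> \<delta> where "b < \<beta>" "0 < \<delta>"
    "\<And>x1 x2. x1 \<in> cball z \<delta> \<Longrightarrow> x2 \<in> cball z \<delta> \<Longrightarrow> \<beta> * norm (x1 - x2) \<le> norm (g x1 - g x2)"
  using assms unfolding inj_bound_def less_Sup_iff by auto

lemma lop_greaterE:
  assumes "ereal b < lop h z" "0 \<le> b"
  obtains \<alpha> U V where "b < \<alpha>" "open U" "z \<in> U" "open V" "h z \<in> V"
    "\<And>x r. x \<in> U \<Longrightarrow> 0 < r \<Longrightarrow> ball (h x) (\<alpha> * r) \<inter> V \<subseteq> h ` ball x r"
  using assms unfolding lop_def less_Sup_iff by auto

lemma inj_on_ball_if_injective_estimator:
  assumes est: "strict_estimator f g eta z" and inj: "ereal eta < inj_bound g z"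
  obtains \<delta> where "0 < \<delta>" "inj_on f (ball z \<delta>)"
proof -
  obtain \<beta> \<delta>g where \<beta>: "eta < \<beta>" "0 < \<delta>g"
    and g_expands: "\<And>x1 x2. x1 \<in> cball z \<delta>g \<Longrightarrow> x2 \<in> cball z \<delta>g \<Longrightarrow>
                       \<beta> * norm (x1 - x2) \<le> norm (g x1 - g x2)"
    using inj_bound_greaterE[OF inj] by blast
  obtain l U where l: "l < \<beta>" "open U" "z \<in> U"
    and e_lip: "\<And>x1 x2. x1 \<in> U \<Longrightarrow> x2 \<in> U \<Longrightarrow>
                  norm ((f x1 - g x1) - (f x2 - g x2)) \<le> l * norm (x1 - x2)"
    using strict_estimator_lipschitz_near[OF est \<beta>(1)] by metis
  obtain \<delta>U where \<delta>U: "0 < \<delta>U" "ball z \<delta>U \<subseteq> U"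
    using l open_contains_ball by blast
  have "inj_on f (ball z (min \<delta>g \<delta>U))"
  proof (rule inj_onI)
    fix x1 x2 assume x: "x1 \<in> ball z (min \<delta>g \<delta>U)" "x2 \<in> ball z (min \<delta>g \<delta>U)" and "f x1 = f x2"
    then have "g x1 - g x2 = - ((f x1 - g x1) - (f x2 - g x2))" by simp
    then have "\<beta> * norm (x1 - x2) \<le> norm ((f x1 - g x1) - (f x2 - g x2))"
      using g_expands x
      by (metis mem_ball mem_cball min.strict_boundedE less_imp_le norm_minus_cancel)
    also have "\<dots> \<le> l * norm (x1 - x2)"
      using e_lip x \<delta>U(2) by (meson in_mono mem_ball min_less_iff_conj)
    finally show "x1 = x2" using l(1) by (simp add: mult_le_cancel_right)
  qed
  then show ?thesis using that[of "min \<delta>g \<delta>U"] \<beta>(2) \<delta>U(1) by simp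
qed

lemma dist_le_sum_steps:
  fixes X :: "nat \<Rightarrow> 'a::real_normed_vector"
  assumes "\<And>j. j < k \<Longrightarrow> norm (X (Suc j) - X j) \<le> d j"
  shows "norm (X k - X 0) \<le> (\<Sum>j<k. d j)"
proof -
  have "norm (X k - X 0) = norm (\<Sum>j<k. X (Suc j) - X j)"
    by (simp add: sum_lessThan_telescope)
  also have "\<dots> \<le> (\<Sum>j<k. d j)"
    using assms by (intro sum_norm_le) simp
  finally show ?thesis .
qed

lemma geometric_steps_dist:
  fixes X :: "nat \<Rightarrow> 'a::real_normed_vector"
  assumes steps: "\<And>j. j < k \<Longrightarrow> norm (X (Suc j) - X j) \<le> C * q ^ j"
    and "0 \<le> C" "0 \<le> q" "q < 1"
  shows "norm (X k - X 0) \<le> C / (1 - q)"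
proof -
  have "norm (X k - X 0) \<le> (\<Sum>j<k. C * q ^ j)"
    using steps by (rule dist_le_sum_steps)
  also have "\<dots> = C * ((1 - q ^ k) / (1 - q))"
    using assms by (subst sum_distrib_left[symmetric], subst geometric_sum) (auto simp: field_simps)
  also have "\<dots> \<le> C * (1 / (1 - q))"
    using assms by (intro mult_left_mono divide_right_mono) auto
  finally show ?thesis by simp
qed

lemma geometric_steps_convergent:
  fixes X :: "nat \<Rightarrow> 'a::banach"
  assumes steps: "\<And>j. norm (X (Suc j) - X j) \<le> C * q ^ j" and "0 \<le> q" "q < 1"
  shows "convergent X"
proof -
  have "summable (\<lambda>j. C * q ^ j)"
    using assms by (simp add: summable_geometric)
  then have "summable (\<lambda>j. norm (X (Suc j) - X j))"
    by (rule summable_comparison_test'[of _ 0]) (simp add: steps)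
  then have "summable (\<lambda>j. X (Suc j) - X j)"
    by (rule summable_norm_cancel)
  then have "convergent (\<lambda>n. X n - X 0)"
    by (simp add: summable_iff_convergent sum_lessThan_telescope)
  then show ?thesis
    by (simp add: convergent_diff_const_right_iff)
qed

lemma descent_iterates:
  fixes f :: "'a::real_normed_vector \<Rightarrow> 'b::real_normed_vector"
  assumes c: "0 < c" and q: "0 \<le> q" "q < 1"
    and descent: "\<And>x. x \<in> ball w r \<Longrightarrow> \<exists>x'. norm (x' - x) \<le> norm (y - f x) / c
                     \<and> (x' \<in> ball w r \<longrightarrow> norm (y - f x') \<le> q * norm (y - f x))"
    and close: "norm (y - f w) < c * (1 - q) * r"
  obtains X where "X 0 = w" "\<And>n. X n \<in> ball w r"
    "\<And>n. norm (X (Suc n) - X n) \<le> norm (y - f w) / c * q ^ n"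
    "\<And>n. norm (y - f (X n)) \<le> q ^ n * norm (y - f w)"
proof -
  define D where "D = norm (y - f w)"
  have "\<forall>x\<in>ball w r. \<exists>x'. norm (x' - x) \<le> norm (y - f x) / c
      \<and> (x' \<in> ball w r \<longrightarrow> norm (y - f x') \<le> q * norm (y - f x))"
    using descent by blast
  then obtain step where step: "\<forall>x\<in>ball w r. norm (step x - x) \<le> norm (y - f x) / c
      \<and> (step x \<in> ball w r \<longrightarrow> norm (y - f (step x)) \<le> q * norm (y - f x))"
    by (metis bchoice)
  define X where "X n = (step ^^ n) w" for n
  have X0: "X 0 = w" and XS: "X (Suc n) = step (X n)" for n
    by (simp_all add: X_def)
  have in_ball: "X k \<in> ball w r"
    if "\<And>j. j < k \<Longrightarrow> norm (X (Suc j) - X j) \<le> D / c * q ^ j" for k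
  proof -
    have "norm (X k - w) \<le> D / c / (1 - q)"
      using geometric_steps_dist[of k X "D / c" q] that q c by (simp add: X0 D_def)
    also have "\<dots> < r"
      using close c q by (simp add: D_def field_simps)
    finally show ?thesis
      by (simp add: dist_norm norm_minus_commute)
  qed
  have invariant: "(\<forall>j<k. norm (X (Suc j) - X j) \<le> D / c * q ^ j) \<and> norm (y - f (X k)) \<le> q ^ k * D"
    for k
  proof (induction k)
    case 0
    show ?case by (simp add: X0 D_def)
  next
    case (Suc k)
    then have Xk: "X k \<in> ball w r"
      by (intro in_ball) blast
    note step_k = step[rule_format, OF Xk, folded XS]
    have "norm (X (Suc k) - X k) \<le> norm (y - f (X k)) / c"
      using step_k by blast
    also have "\<dots> \<le> D / c * q ^ k"
      using Suc c by (simp add: divide_right_mono mult.commute)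
    finally have steps: "\<forall>j<Suc k. norm (X (Suc j) - X j) \<le> D / c * q ^ j"
      using Suc less_Suc_eq by auto
    then have "X (Suc k) \<in> ball w r"
      by (intro in_ball) blast
    then have "norm (y - f (X (Suc k))) \<le> q * norm (y - f (X k))"
      using step_k by blast
    also have "\<dots> \<le> q ^ Suc k * D"
      using Suc q by (auto simp: mult.assoc intro!: mult_left_mono)
    finally show ?case using steps by blast
  qed
  have "X n \<in> ball w r" for n
    by (rule in_ball) (use invariant in blast)
  moreover have "norm (X (Suc n) - X n) \<le> D / c * q ^ n" for n
    using invariant[of "Suc n"] by blast
  ultimately show ?thesis
    using that X0 invariant unfolding D_def by blast
qed

lemma solve_by_descent:
  fixes f :: "'a::banach \<Rightarrow> 'b::real_normed_vector"
  assumes cont: "continuous_on (ball w r) f" and c: "0 < c" and q: "0 \<le> q" "q < 1"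
    and descent: "\<And>x. x \<in> ball w r \<Longrightarrow> \<exists>x'. norm (x' - x) \<le> norm (y - f x) / c
                     \<and> (x' \<in> ball w r \<longrightarrow> norm (y - f x') \<le> q * norm (y - f x))"
    and close: "norm (y - f w) < c * (1 - q) * r"
  shows "y \<in> f ` ball w r"
proof -
  define D where "D = norm (y - f w)"
  obtain X where X0: "X 0 = w" and in_ball: "\<And>n. X n \<in> ball w r"
    and steps: "\<And>n. norm (X (Suc n) - X n) \<le> D / c * q ^ n"
    and residual: "\<And>n. norm (y - f (X n)) \<le> q ^ n * D"
    using descent_iterates[OF c q descent close] unfolding D_def by blast
  obtain L where L: "X \<longlonglongrightarrow> L"
    using geometric_steps_convergent[OF steps q] by (auto simp: convergent_def)
  have "norm (X n - w) \<le> D / c / (1 - q)" for n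
    using geometric_steps_dist[of n X "D / c" q] steps q c X0 by (simp add: D_def)
  then have "norm (L - w) \<le> D / c / (1 - q)"
    by (intro Lim_norm_ubound[OF _ tendsto_diff[OF L tendsto_const]]) simp_all
  also have "\<dots> < r"
    using close c q by (simp add: D_def field_simps)
  finally have L_in: "L \<in> ball w r"
    by (simp add: dist_norm norm_minus_commute)
  have "(\<lambda>n. f (X n)) \<longlonglongrightarrow> f L"
    using continuous_on_tendsto_compose[OF cont L L_in] in_ball by simp
  moreover have "(\<lambda>n. f (X n)) \<longlonglongrightarrow> y"
  proof (rule LIM_zero_cancel, rule Lim_null_comparison)
    show "\<forall>\<^sub>F n in sequentially. norm (f (X n) - y) \<le> q ^ n * D"
      using residual by (simp add: norm_minus_commute)
    show "(\<lambda>n. q ^ n * D) \<longlonglongrightarrow> 0"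
      using q by (intro tendsto_mult_left_zero LIMSEQ_power_zero) auto
  qed
  ultimately have "f L = y"
    by (rule LIMSEQ_unique)
  then show ?thesis
    using L_in by blast
qed

definition linearly_open_on ::
  "('a::real_normed_vector \<Rightarrow> 'b::real_normed_vector) \<Rightarrow> real \<Rightarrow> 'a set \<Rightarrow> real \<Rightarrow> bool" where
  "linearly_open_on f c S \<delta> \<longleftrightarrow> (\<forall>w\<in>S. \<forall>r. 0 < r \<longrightarrow> r \<le> \<delta> \<longrightarrow> ball (f w) (c * r) \<subseteq> f ` ball w r)"

lemma linearly_open_on_mono:
  assumes "linearly_open_on f c S \<delta>" "T \<subseteq> S" "\<delta>' \<le> \<delta>"
  shows "linearly_open_on f c T \<delta>'"
  using assms unfolding linearly_open_on_def by (meson order_trans subsetD)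

lemma linear_openness_preimage:
  assumes h_open: "\<And>s. 0 < s \<Longrightarrow> ball (h x) (\<alpha> * s) \<inter> V \<subseteq> h ` ball x s"
    and t: "t \<in> V" and c: "0 < c" "c < \<alpha>"
  shows "\<exists>x'. h x' = t \<and> norm (x' - x) \<le> norm (t - h x) / c"
proof (cases "t = h x")
  case True
  then show ?thesis by (intro exI[of _ x]) simp
next
  case False
  define s where "s = norm (t - h x) / c"
  have s: "0 < s" "norm (t - h x) = c * s"
    using False c by (simp_all add: s_def)
  then have "dist (h x) t < \<alpha> * s"
    using c by (simp add: dist_norm norm_minus_commute)
  then have "t \<in> h ` ball x s"
    using h_open[OF s(1)] t by auto
  then obtain x' where "x' \<in> ball x s" "t = h x'"
    by blast
  then show ?thesis
    by (intro exI[of _ x']) (auto simp: s_def dist_norm norm_minus_commute)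
qed

(* Graves' iteration: each step solves h x' = y - (f - h) x, and the residual
   y - f x' = (f - h) x - (f - h) x' shrinks by the factor q = m / c1 < 1. *)
lemma perturbed_equation_solvable:
  fixes f h :: "'a::banach \<Rightarrow> 'b::real_normed_vector"
  assumes cont: "continuous_on (ball w r) f"
    and h_open: "\<And>x s. x \<in> ball w r \<Longrightarrow> 0 < s \<Longrightarrow> ball (h x) (\<alpha> * s) \<inter> V \<subseteq> h ` ball x s"
    and e_lip: "\<And>x1 x2. x1 \<in> ball w r \<Longrightarrow> x2 \<in> ball w r \<Longrightarrow>
                  norm ((f x1 - h x1) - (f x2 - h x2)) \<le> m * norm (x1 - x2)"
    and targets: "\<And>x. x \<in> ball w r \<Longrightarrow> y - (f x - h x) \<in> V"
    and m: "0 \<le> m" and c: "0 < c" "c + m < \<alpha>" and y: "norm (y - f w) < c * r"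
  shows "y \<in> f ` ball w r"
proof -
  define c1 where "c1 = (\<alpha> + c + m) / 2"
  define q where "q = m / c1"
  have c1: "0 < c1" "c + m < c1" "c1 < \<alpha>" and q: "0 \<le> q" "q < 1" "c1 * (1 - q) = c1 - m"
    using c m by (auto simp: c1_def q_def field_simps)
  show ?thesis
  proof (rule solve_by_descent[OF cont c1(1) q(1,2)])
    fix x assume x: "x \<in> ball w r"
    obtain x' where x': "h x' = y - (f x - h x)" "norm (x' - x) \<le> norm (y - (f x - h x) - h x) / c1"
      using linear_openness_preimage[OF h_open[OF x] targets[OF x] c1(1,3)] by blast
    have "norm (y - f x') \<le> q * norm (y - f x)" if "x' \<in> ball w r"
    proof -
      have "norm (y - f x') = norm ((f x - h x) - (f x' - h x'))"
        using x'(1) by (simp add: algebra_simps)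
      also have "\<dots> \<le> m * norm (x - x')"
        using e_lip[OF x that] .
      also have "\<dots> \<le> m * (norm (y - f x) / c1)"
        using x'(2) m by (intro mult_left_mono) (simp_all add: norm_minus_commute)
      finally show ?thesis
        by (simp add: q_def)
    qed
    then show "\<exists>x'. norm (x' - x) \<le> norm (y - f x) / c1
                 \<and> (x' \<in> ball w r \<longrightarrow> norm (y - f x') \<le> q * norm (y - f x))"
      using x'(2) by auto
  next
    have "0 < r"
      using y c norm_ge_zero[of "y - f w"] by (meson order_le_less_trans zero_less_mult_pos)
    then have "c * r \<le> c1 * (1 - q) * r"
      using c1 q by (intro mult_right_mono) auto
    then show "norm (y - f w) < c1 * (1 - q) * r"
      using y by linarith
  qed
qed

lemma perturbed_equation_solvable_near:
  fixes f h :: "'a::banach \<Rightarrow> 'b::real_normed_vector"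
  assumes cont: "continuous_on UNIV f"
    and h_open: "\<And>x s. x \<in> U \<Longrightarrow> 0 < s \<Longrightarrow> ball (h x) (\<alpha> * s) \<inter> V \<subseteq> h ` ball x s"
    and e_lip: "\<And>x1 x2. x1 \<in> U \<Longrightarrow> x2 \<in> U \<Longrightarrow>
                  norm ((f x1 - h x1) - (f x2 - h x2)) \<le> m * norm (x1 - x2)"
    and m: "0 \<le> m" and c: "0 < c" "c + m < \<alpha>"
    and U: "ball z (2 * \<delta>) \<subseteq> U" and V: "ball (h z) \<epsilon> \<subseteq> V"
    and small: "c * \<delta> + 2 * (m * \<delta>) + norm (f w - f z) < \<epsilon>"
    and w: "w \<in> ball z \<delta>" and r: "0 < r" "r \<le> \<delta>" and y: "y \<in> ball (f w) (c * r)"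
  shows "y \<in> f ` ball w r"
proof -
  have near_z: "norm (x - z) < 2 * \<delta>" if "x \<in> ball w r" for x
    using that w r dist_triangle[of z x w] by (simp add: dist_norm norm_minus_commute)
  then have in_U: "x \<in> U" if "x \<in> ball w r" for x
    using that U by (force simp: dist_norm norm_minus_commute)
  have "0 < \<delta>"
    using w by (simp add: dist_norm) (meson norm_ge_zero order_le_less_trans)
  then have "z \<in> U"
    using U by (simp add: subset_iff)
  have y_w: "norm (y - f w) < c * r"
    using y by (simp add: dist_norm norm_minus_commute)
  also have "\<dots> \<le> c * \<delta>"
    using r c by (intro mult_left_mono) auto
  finally have y_w': "norm (y - f w) < c * \<delta>" .
  show ?thesis
  proof (rule perturbed_equation_solvable[where h = h and V = V and \<alpha> = \<alpha> and m = m])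
    fix x assume x: "x \<in> ball w r"
    have "norm ((f z - h z) - (f x - h x)) \<le> m * norm (z - x)"
      using e_lip[OF \<open>z \<in> U\<close> in_U[OF x]] .
    also have "\<dots> \<le> m * (2 * \<delta>)"
      using near_z[OF x] m by (intro mult_left_mono) (auto simp: norm_minus_commute)
    finally have "norm ((f z - h z) - (f x - h x)) \<le> 2 * (m * \<delta>)"
      by simp
    moreover have "y - (f x - h x) - h z = (y - f w) + (f w - f z) + ((f z - h z) - (f x - h x))"
      by (simp add: algebra_simps)
    then have "norm (y - (f x - h x) - h z)
        \<le> norm ((y - f w) + (f w - f z)) + norm ((f z - h z) - (f x - h x))"
      by (simp only: norm_triangle_ineq)
    moreover have "norm ((y - f w) + (f w - f z)) \<le> norm (y - f w) + norm (f w - f z)"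
      by (rule norm_triangle_ineq)
    ultimately have "norm (y - (f x - h x) - h z) < \<epsilon>"
      using y_w' small by linarith
    then show "y - (f x - h x) \<in> V"
      using V by (auto simp: dist_norm norm_minus_commute)
  qed (use cont h_open e_lip in_U m c y_w in \<open>auto intro: continuous_on_subset\<close>)
qed

lemma linearly_open_perturbation:
  fixes f h :: "'a::banach \<Rightarrow> 'b::real_normed_vector"
  assumes cont: "continuous_on UNIV f"
    and U: "open U" "z \<in> U" and V: "open V" "h z \<in> V"
    and h_open: "\<And>x s. x \<in> U \<Longrightarrow> 0 < s \<Longrightarrow> ball (h x) (\<alpha> * s) \<inter> V \<subseteq> h ` ball x s"
    and e_lip: "\<And>x1 x2. x1 \<in> U \<Longrightarrow> x2 \<in> U \<Longrightarrow>
                  norm ((f x1 - h x1) - (f x2 - h x2)) \<le> m * norm (x1 - x2)"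
    and m: "0 \<le> m" and c: "0 < c" "c + m < \<alpha>"
  obtains \<delta> where "0 < \<delta>" "linearly_open_on f c (ball z \<delta>) \<delta>"
proof -
  obtain \<rho> where \<rho>: "0 < \<rho>" "ball z \<rho> \<subseteq> U"
    using U open_contains_ball by blast
  obtain \<epsilon> where \<epsilon>: "0 < \<epsilon>" "ball (h z) \<epsilon> \<subseteq> V"
    using V open_contains_ball by blast
  obtain \<delta>f where \<delta>f: "0 < \<delta>f" "\<And>w. dist w z < \<delta>f \<Longrightarrow> dist (f w) (f z) < \<epsilon> / 4"
    using cont \<epsilon>(1) unfolding continuous_on_iff
    by (metis UNIV_I zero_less_divide_iff zero_less_numeral)
  define \<delta> where "\<delta> = min (min (\<rho> / 2) \<delta>f) (\<epsilon> / (4 * (c + m)))"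
  have \<delta>: "0 < \<delta>" "\<delta> \<le> \<rho> / 2" "\<delta> \<le> \<delta>f" "\<delta> \<le> \<epsilon> / (4 * (c + m))"
    using \<rho> \<delta>f \<epsilon> c m unfolding \<delta>_def by (simp, meson min.cobounded1 min.cobounded2 order_trans)+
  have "4 * (c * \<delta>) + 4 * (m * \<delta>) \<le> \<epsilon>"
    using \<delta>(4) c m by (simp add: pos_le_divide_eq algebra_simps)
  then have small: "c * \<delta> + 2 * (m * \<delta>) \<le> \<epsilon> / 2"
    using mult_pos_pos[OF c(1) \<delta>(1)] mult_nonneg_nonneg[OF m less_imp_le[OF \<delta>(1)]] by linarith
  have "ball z (2 * \<delta>) \<subseteq> U"
    by (rule order_trans[OF subset_ball \<rho>(2)]) (use \<delta>(2) in simp)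
  have "linearly_open_on f c (ball z \<delta>) \<delta>"
    unfolding linearly_open_on_def
  proof (intro ballI allI impI subsetI)
    fix w r y assume w: "w \<in> ball z \<delta>" and "0 < r" "r \<le> \<delta>" "y \<in> ball (f w) (c * r)"
    moreover have "norm (f w - f z) < \<epsilon> / 4"
      using \<delta>f w \<delta>(3) by (simp add: dist_norm norm_minus_commute)
    then have "c * \<delta> + 2 * (m * \<delta>) + norm (f w - f z) < \<epsilon>"
      using small \<epsilon>(1) by linarith
    ultimately show "y \<in> f ` ball w r"
      using perturbed_equation_solvable_near[OF cont h_open e_lip m c
          \<open>ball z (2 * \<delta>) \<subseteq> U\<close> \<epsilon>(2)]
      by blast
  qed
  then show ?thesis
    using that \<delta>(1) by blast
qed

definition regular_near ::
  "('a::real_normed_vector \<Rightarrow> 'b::real_normed_vector) \<Rightarrow> real \<Rightarrow> 'a \<Rightarrow> real \<Rightarrow> bool" where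
  "regular_near f c z \<delta> \<longleftrightarrow> linearly_open_on f c (ball z \<delta>) \<delta> \<and>
     (\<forall>x1\<in>ball z \<delta>. \<forall>x2\<in>ball z \<delta>. c * norm (x1 - x2) \<le> norm (f x1 - f x2))"

lemma expansion_if_linearly_open_inj_on:
  assumes open_f: "linearly_open_on f c S \<rho>" and inj: "inj_on f W"
    and balls: "\<And>x. x \<in> S \<Longrightarrow> ball x \<rho> \<subseteq> W"
    and x: "x1 \<in> S" "x2 \<in> S" "norm (x1 - x2) \<le> \<rho>"
  shows "c * norm (x1 - x2) \<le> norm (f x1 - f x2)"
proof (rule ccontr)
  assume "\<not> ?thesis"
  then have lt: "norm (f x1 - f x2) < c * norm (x1 - x2)"
    by simp
  then have pos: "0 < norm (x1 - x2)"
    using norm_ge_zero[of "f x1 - f x2"] by (cases "norm (x1 - x2) = 0") auto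
  have "f x2 \<in> ball (f x1) (c * norm (x1 - x2))"
    using lt by (simp add: dist_norm)
  moreover have "ball (f x1) (c * norm (x1 - x2)) \<subseteq> f ` ball x1 (norm (x1 - x2))"
    using open_f x(1) x(3) pos by (simp add: linearly_open_on_def)
  ultimately obtain w where w: "w \<in> ball x1 (norm (x1 - x2))" "f w = f x2"
    by (metis imageE subsetD)
  have "ball x1 (norm (x1 - x2)) \<subseteq> W"
    using subset_ball[OF x(3)] balls[OF x(1)] by (rule order_trans)
  then have "w \<in> W"
    using w(1) by (rule subsetD)
  moreover have "x2 \<in> W"
    using balls[OF x(2)] pos x(3) by (meson centre_in_ball order_less_le_trans subsetD)
  ultimately have "w = x2"
    using inj w(2) by (metis inj_onD)
  then show False
    using w(1) by (simp add: dist_norm)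
qed

lemma regular_near_if_open_inj:
  assumes "0 < \<delta>1" "linearly_open_on f c (ball z \<delta>1) \<delta>1" "0 < \<delta>2" "inj_on f (ball z \<delta>2)"
  obtains \<delta> where "0 < \<delta>" "regular_near f c z \<delta>"
proof -
  define \<delta> where "\<delta> = min \<delta>1 \<delta>2 / 3"
  have \<delta>: "0 < \<delta>" "3 * \<delta> \<le> \<delta>1" "3 * \<delta> \<le> \<delta>2"
    using assms by (auto simp: \<delta>_def)
  have open_f: "linearly_open_on f c (ball z \<delta>) (2 * \<delta>)"
    by (rule linearly_open_on_mono[OF assms(2)]) (use \<delta> in \<open>auto intro!: subset_ball\<close>)
  have "regular_near f c z \<delta>"
    unfolding regular_near_def
  proof (intro conjI ballI)
    show "linearly_open_on f c (ball z \<delta>) \<delta>"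
      by (rule linearly_open_on_mono[OF open_f]) (use \<delta> in auto)
  next
    fix x1 x2 assume x: "x1 \<in> ball z \<delta>" "x2 \<in> ball z \<delta>"
    show "c * norm (x1 - x2) \<le> norm (f x1 - f x2)"
    proof (rule expansion_if_linearly_open_inj_on[OF open_f assms(4) _ x])
      show "ball x (2 * \<delta>) \<subseteq> ball z \<delta>2" if "x \<in> ball z \<delta>" for x
      proof
        fix v assume "v \<in> ball x (2 * \<delta>)"
        then show "v \<in> ball z \<delta>2"
          using that \<delta> dist_triangle[of z v x] by simp
      qed
      have "dist x1 x2 \<le> 2 * \<delta>"
        using x dist_triangle[of x1 x2 z] by (simp add: dist_commute)
      then show "norm (x1 - x2) \<le> 2 * \<delta>"
        by (simp add: dist_norm)
    qed
  qed
  then show ?thesis using that \<delta>(1) by blast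
qed

lemma regular_near_mono:
  assumes "regular_near f c z \<delta>" "dist z z' + \<delta>' \<le> \<delta>"
  shows "regular_near f c z' \<delta>'"
proof -
  have "ball z' \<delta>' \<subseteq> ball z \<delta>"
  proof
    fix v assume "v \<in> ball z' \<delta>'"
    then show "v \<in> ball z \<delta>"
      using assms(2) dist_triangle[of z v z'] by simp
  qed
  moreover have "\<delta>' \<le> \<delta>"
    using assms(2) zero_le_dist[of z z'] by linarith
  ultimately show ?thesis
    using assms(1) unfolding regular_near_def by (meson linearly_open_on_mono subsetD)
qed

lemma regular_near_uniform:
  assumes reg: "\<And>z. z \<in> K \<Longrightarrow> \<exists>\<delta>>0. regular_near f c z \<delta>" and "compact K"
  obtains \<delta> where "0 < \<delta>" "\<And>z. z \<in> K \<Longrightarrow> regular_near f c z \<delta>"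
proof -
  have "\<forall>z\<in>K. \<exists>\<delta>. 0 < \<delta> \<and> regular_near f c z \<delta>"
    using reg by blast
  then obtain d where d: "\<forall>z\<in>K. 0 < d z \<and> regular_near f c z (d z)"
    by (rule bchoice[elim_format]) blast
  have "K \<subseteq> (\<Union>z\<in>K. ball z (d z / 2))"
  proof
    fix z assume "z \<in> K"
    then have "z \<in> ball z (d z / 2)"
      using d by simp
    then show "z \<in> (\<Union>z\<in>K. ball z (d z / 2))"
      using \<open>z \<in> K\<close> by blast
  qed
  then obtain T where T: "T \<subseteq> K" "finite T" "K \<subseteq> (\<Union>z\<in>T. ball z (d z / 2))"
    by (rule compactE_image[OF \<open>compact K\<close>, rotated]) auto
  define \<delta> where "\<delta> = Min (insert 1 ((\<lambda>z. d z / 2) ` T))"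
  have "0 < \<delta>"
    unfolding \<delta>_def using T d by (subst Min_gr_iff) auto
  moreover have "regular_near f c w \<delta>" if w: "w \<in> K" for w
  proof -
    obtain t where t: "t \<in> T" "w \<in> ball t (d t / 2)"
      using T w by blast
    have "\<delta> \<le> d t / 2"
      unfolding \<delta>_def using T(2) t(1) by (intro Min_le) auto
    then have "dist t w + \<delta> \<le> d t"
      using t by simp
    moreover have "regular_near f c t (d t)"
      using d T t by blast
    ultimately show ?thesis
      using regular_near_mono by blast
  qed
  ultimately show ?thesis
    using that by blast
qed

lemma regular_near_if_estimator_inj_on:
  fixes f h :: "'a::banach \<Rightarrow> 'b::real_normed_vector"
  assumes cont: "continuous_on UNIV f" and est: "strict_estimator f h mu z"
    and lop: "ereal (c + mu) < lop h z" and inj: "0 < \<delta>0" "inj_on f (ball z \<delta>0)"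
    and c: "0 < c" and mu: "0 \<le> mu"
  obtains \<delta> where "0 < \<delta>" "regular_near f c z \<delta>"
proof -
  obtain \<alpha> U V where \<alpha>: "c + mu < \<alpha>" "open U" "z \<in> U" "open V" "h z \<in> V"
    and h_open: "\<And>x r. x \<in> U \<Longrightarrow> 0 < r \<Longrightarrow> ball (h x) (\<alpha> * r) \<inter> V \<subseteq> h ` ball x r"
    by (rule lop_greaterE[OF lop]) (use c mu in auto)
  obtain l U' where l: "0 < l" "l < \<alpha> - c" "open U'" "z \<in> U'"
    and e_lip: "\<And>x1 x2. x1 \<in> U' \<Longrightarrow> x2 \<in> U' \<Longrightarrow>
                  norm ((f x1 - h x1) - (f x2 - h x2)) \<le> l * norm (x1 - x2)"
    by (rule strict_estimator_lipschitz_near[OF est, of "\<alpha> - c"]) (use \<alpha>(1) in auto)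
  obtain \<delta>1 where "0 < \<delta>1" "linearly_open_on f c (ball z \<delta>1) \<delta>1"
  proof (rule linearly_open_perturbation[where f = f and h = h and z = z and U = "U \<inter> U'" and V = V
        and \<alpha> = \<alpha> and m = l and c = c])
    show "open (U \<inter> U')" "z \<in> U \<inter> U'"
      using \<alpha> l by auto
  qed (use cont \<alpha> h_open e_lip l c in auto)
  then show ?thesis
    using regular_near_if_open_inj inj that by blast
qed

lemma linearly_open_on_if_regular_near:
  assumes "\<And>z. z \<in> K \<Longrightarrow> regular_near f c z \<delta>" "r \<le> \<delta>"
  shows "linearly_open_on f c K r"
  unfolding linearly_open_on_def
proof (intro ballI allI impI)
  fix w s assume w: "w \<in> K" and s: "0 < s" "s \<le> r"
  then have "w \<in> ball w \<delta>" "s \<le> \<delta>"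
    using assms(2) by auto
  then show "ball (f w) (c * s) \<subseteq> f ` ball w s"
    using assms(1)[OF w] s(1) by (simp add: regular_near_def linearly_open_on_def)
qed

lemma exists_nat_divide_less:
  fixes \<rho> \<epsilon> :: real
  assumes "0 \<le> \<rho>" "0 < \<epsilon>"
  obtains N :: nat where "0 < N" "\<rho> / real N < \<epsilon>"
proof -
  obtain N :: nat where N: "\<rho> / \<epsilon> < real N"
    using reals_Archimedean2 by blast
  moreover have "0 \<le> \<rho> / \<epsilon>"
    using assms by simp
  ultimately have "0 < N"
    by linarith
  moreover have "\<rho> / real N < \<epsilon>"
    using N assms \<open>0 < N\<close> by (simp add: field_simps)
  ultimately show ?thesis
    using that by blast
qed

definition segment_lift ::
  "('a::real_normed_vector \<Rightarrow> 'b::real_normed_vector) \<Rightarrow> 'a \<Rightarrow> 'b \<Rightarrow> nat \<Rightarrow> real \<Rightarrow> (nat \<Rightarrow> 'a) \<Rightarrow> bool"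
  where
  "segment_lift f x y N r X \<longleftrightarrow> X 0 = x \<and>
     (\<forall>k<N. f (X (Suc k)) = f x + (real (Suc k) / real N) *\<^sub>R (y - f x)
       \<and> norm (X (Suc k) - X k) < r)"

lemma segment_lift_dist:
  assumes "segment_lift f x y N r X" "k \<le> N"
  shows "norm (X k - x) \<le> real k * r"
proof -
  have "norm (X (Suc j) - X j) \<le> r" if "j < k" for j
    using assms that unfolding segment_lift_def by (meson less_imp_le order_less_le_trans)
  then show ?thesis
    using dist_le_sum_steps[of k X "\<lambda>_. r"] assms(1) by (simp add: segment_lift_def)
qed

lemma segment_lift_end:
  assumes "segment_lift f x y N r X" "0 < N"
  shows "f (X N) = y"
  using assms by (cases N) (auto simp: segment_lift_def)

lemma segment_lift_exists:
  assumes open_f: "linearly_open_on f c (cball x (real N * r)) r" and r: "0 < r"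
    and y: "norm (y - f x) < real N * c * r"
  shows "\<exists>X. segment_lift f x y N r X"
proof -
  define t where "t k = f x + (real k / real N) *\<^sub>R (y - f x)" for k
  have N: "0 < N"
    using y by (cases N) auto
  have t_step: "norm (t (Suc k) - t k) < c * r" for k
  proof -
    have "t (Suc k) - t k = (1 / real N) *\<^sub>R (y - f x)"
      by (simp add: t_def add_divide_distrib scaleR_add_left)
    then show ?thesis
      using y N by (simp add: divide_less_eq mult.commute mult.left_commute)
  qed
  have "\<exists>X. X 0 = x \<and> (\<forall>j<k. f (X (Suc j)) = t (Suc j) \<and> norm (X (Suc j) - X j) < r)"
    if "k \<le> N" for k
    using that
  proof (induction k)
    case 0
    show ?case by (intro exI[of _ "\<lambda>_. x"]) simp
  next
    case (Suc k)
    then obtain X where X: "X 0 = x" "\<forall>j<k. f (X (Suc j)) = t (Suc j) \<and> norm (X (Suc j) - X j) < r"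
      by auto
    have "f (X k) = t k"
      using X by (cases k) (simp_all add: t_def)
    have "norm (X k - x) \<le> real k * r"
      using dist_le_sum_steps[of k X "\<lambda>_. r"] X by (simp add: less_imp_le)
    also have "\<dots> \<le> real N * r"
      using Suc.prems r by (intro mult_right_mono) auto
    finally have "X k \<in> cball x (real N * r)"
      by (simp add: dist_norm norm_minus_commute)
    then have "ball (f (X k)) (c * r) \<subseteq> f ` ball (X k) r"
      using open_f r unfolding linearly_open_on_def by blast
    moreover have "t (Suc k) \<in> ball (f (X k)) (c * r)"
      using t_step \<open>f (X k) = t k\<close> by (simp add: dist_norm norm_minus_commute)
    ultimately obtain w where w: "w \<in> ball (X k) r" "f w = t (Suc k)"
      by (metis imageE subsetD)
    show ?case
      using X w
      by (intro exI[of _ "X(Suc k := w)"]) (auto simp: dist_norm norm_minus_commute less_Suc_eq)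
  qed
  from this[of N] show ?thesis
    by (auto simp: segment_lift_def t_def)
qed

lemma segment_lift_image_dist:
  assumes X: "segment_lift f x y N r X" and X': "segment_lift f x' y N r X'" and k: "k < N"
  shows "norm (f (X (Suc k)) - f (X' (Suc k))) \<le> norm (f x - f x')"
proof -
  define s where "s = real (Suc k) / real N"
  have s: "0 \<le> s" "s \<le> 1"
    using k by (auto simp: s_def)
  have "f (X (Suc k)) - f (X' (Suc k)) = (f x + s *\<^sub>R (y - f x)) - (f x' + s *\<^sub>R (y - f x'))"
    using X X' k by (simp add: segment_lift_def s_def)
  also have "\<dots> = (1 - s) *\<^sub>R (f x - f x')"
    by (simp add: algebra_simps)
  finally have "norm (f (X (Suc k)) - f (X' (Suc k))) = (1 - s) * norm (f x - f x')"
    using s by simp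
  also have "\<dots> \<le> norm (f x - f x')"
    using s by (simp add: mult_left_le_one_le)
  finally show ?thesis .
qed

lemma segment_lifts_stay_close:
  assumes reg: "\<And>z. z \<in> K \<Longrightarrow> regular_near f c z \<delta>" and c: "0 < c" and r: "3 * r \<le> \<delta>"
    and X: "segment_lift f x y N r X" and X': "segment_lift f x' y N r X'"
    and X_in_K: "\<And>k. k \<le> N \<Longrightarrow> X k \<in> K"
    and close: "norm (x - x') < \<delta> / 3" "norm (f x - f x') < c * \<delta> / 3"
    and k: "k \<le> N"
  shows "norm (X k - X' k) < \<delta> / 3"
  using k
proof (induction k)
  case 0
  show ?case
    using X X' close by (simp add: segment_lift_def)
next
  case (Suc k)
  have "norm (X (Suc k) - X k) < r" "norm (X' (Suc k) - X' k) < r"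
    using X X' Suc.prems by (simp_all add: segment_lift_def)
  moreover have "norm (X (Suc k) - X' (Suc k))
      \<le> norm (X (Suc k) - X k) + norm (X k - X' k) + norm (X' k - X' (Suc k))"
    using norm_triangle_ineq[of "X (Suc k) - X k" "X k - X' k"]
      norm_triangle_ineq[of "(X (Suc k) - X k) + (X k - X' k)" "X' k - X' (Suc k)"]
    by simp
  ultimately have "norm (X (Suc k) - X' (Suc k)) < \<delta>"
    using Suc r by (simp add: norm_minus_commute)
  moreover from this have "0 < \<delta>"
    using norm_ge_zero[of "X (Suc k) - X' (Suc k)"] by linarith
  ultimately have "X (Suc k) \<in> ball (X (Suc k)) \<delta>" "X' (Suc k) \<in> ball (X (Suc k)) \<delta>"
    by (simp_all add: dist_norm)
  then have "c * norm (X (Suc k) - X' (Suc k)) \<le> norm (f (X (Suc k)) - f (X' (Suc k)))"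
    using reg[OF X_in_K[OF Suc.prems]] unfolding regular_near_def by blast
  also have "\<dots> \<le> norm (f x - f x')"
    using segment_lift_image_dist[OF X X'] Suc.prems by simp
  also have "\<dots> < c * (\<delta> / 3)"
    using close(2) by simp
  finally show ?case
    using c by simp
qed

lemma segment_lifts_same_end:
  assumes reg: "\<And>z. z \<in> K \<Longrightarrow> regular_near f c z \<delta>" and c: "0 < c" and r: "3 * r \<le> \<delta>"
    and X: "segment_lift f x y N r X" and X': "segment_lift f x' y N r X'" and N: "0 < N"
    and X_in_K: "\<And>k. k \<le> N \<Longrightarrow> X k \<in> K"
    and close: "norm (x - x') < \<delta> / 3" "norm (f x - f x') < c * \<delta> / 3"
  shows "X N = X' N"
proof -
  have "norm (X N - X' N) < \<delta> / 3"
    using segment_lifts_stay_close[OF reg c r X X' X_in_K close order_refl] .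
  then have "0 < \<delta>" "norm (X N - X' N) < \<delta>"
    using norm_ge_zero[of "X N - X' N"] by linarith+
  then have "X N \<in> ball (X N) \<delta>" "X' N \<in> ball (X N) \<delta>"
    by (simp_all add: dist_norm)
  then have "c * norm (X N - X' N) \<le> norm (f (X N) - f (X' N))"
    using reg[OF X_in_K[OF order_refl]] unfolding regular_near_def by blast
  also have "\<dots> = 0"
    using segment_lift_end[OF X N] segment_lift_end[OF X' N] by simp
  finally show ?thesis
    using c by (simp add: mult_le_0_iff)
qed

lemma closed_segment_subdivision:
  fixes a b :: "'a::real_normed_vector"
  assumes "0 < d"
  obtains \<gamma> M where "\<gamma> 0 = a" "\<gamma> M = b" "\<And>i. i \<le> M \<Longrightarrow> \<gamma> i \<in> closed_segment a b"
    "\<And>i. norm (\<gamma> (Suc i) - \<gamma> i) < d"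
proof -
  obtain M :: nat where M: "0 < M" "norm (b - a) / real M < d"
    using exists_nat_divide_less[OF norm_ge_zero assms] by blast
  define \<gamma> where "\<gamma> i = a + (real i / real M) *\<^sub>R (b - a)" for i
  have "\<gamma> i \<in> closed_segment a b" if "i \<le> M" for i
  proof -
    have "\<gamma> i = (1 - real i / real M) *\<^sub>R a + (real i / real M) *\<^sub>R b"
      by (simp add: \<gamma>_def algebra_simps)
    then show ?thesis
      using that M unfolding in_segment by (intro exI[of _ "real i / real M"]) auto
  qed
  moreover have "norm (\<gamma> (Suc i) - \<gamma> i) < d" for i
  proof -
    have "\<gamma> (Suc i) - \<gamma> i = (1 / real M) *\<^sub>R (b - a)"
      by (simp add: \<gamma>_def add_divide_distrib scaleR_add_left)
    then show ?thesis
      using M by simp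
  qed
  moreover have "\<gamma> 0 = a" "\<gamma> M = b"
    using M by (simp_all add: \<gamma>_def)
  ultimately show ?thesis
    using that by blast
qed

lemma segment_lift_end_along_segment:
  assumes reg: "\<And>z. z \<in> K \<Longrightarrow> regular_near f c z \<delta>" and c: "0 < c"
    and r: "0 < r" "3 * r \<le> \<delta>" and N: "0 < N"
    and seg: "closed_segment a b \<subseteq> S"
    and lift: "\<And>x. x \<in> S \<Longrightarrow> \<exists>X. segment_lift f x y N r X"
    and lift_in_K: "\<And>x X. x \<in> S \<Longrightarrow> segment_lift f x y N r X \<Longrightarrow> \<forall>k\<le>N. X k \<in> K"
    and \<eta>: "0 < \<eta>" "\<And>x x'. x \<in> S \<Longrightarrow> x' \<in> S \<Longrightarrow> norm (x - x') < \<eta> \<Longrightarrow> norm (f x - f x') < c * \<delta> / 3"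
    and Xa: "segment_lift f a y N r Xa" and Xb: "segment_lift f b y N r Xb"
  shows "Xb N = Xa N"
proof -
  have "0 < min \<eta> (\<delta> / 3)"
    using \<eta> r by simp
  then obtain \<gamma> M where \<gamma>: "\<gamma> 0 = a" "\<gamma> M = b" "\<And>i. i \<le> M \<Longrightarrow> \<gamma> i \<in> closed_segment a b"
    and \<gamma>_step: "\<And>i. norm (\<gamma> (Suc i) - \<gamma> i) < min \<eta> (\<delta> / 3)"
    by (rule closed_segment_subdivision[of _ a b]) (rule that)
  have \<gamma>_in: "\<gamma> i \<in> S" if "i \<le> M" for i
    using \<gamma>(3)[OF that] seg by blast
  have "X N = Xa N" if "i \<le> M" "segment_lift f (\<gamma> i) y N r X" for i X
    using that
  proof (induction i arbitrary: X)
    case 0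
    then have X: "segment_lift f a y N r X"
      using \<gamma>(1) by simp
    have "a \<in> S"
      using \<gamma>_in[of 0] \<gamma>(1) by simp
    moreover have "norm (a - a) < \<delta> / 3" "norm (f a - f a) < c * \<delta> / 3"
      using c r by simp_all
    ultimately show ?case
      using segment_lifts_same_end[OF reg c r(2) X Xa N lift_in_K[OF _ X, rule_format]] by simp
  next
    case (Suc i)
    obtain X' where X': "segment_lift f (\<gamma> i) y N r X'"
      using lift \<gamma>_in Suc.prems(1) by (meson Suc_leD)
    have "norm (\<gamma> (Suc i) - \<gamma> i) < \<delta> / 3" "norm (f (\<gamma> (Suc i)) - f (\<gamma> i)) < c * \<delta> / 3"
      using \<gamma>_step \<eta>(2) \<gamma>_in Suc.prems(1) by auto
    then have "X N = X' N"
      by (intro segment_lifts_same_end[OF reg c r(2) Suc.prems(2) X' N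
            lift_in_K[OF \<gamma>_in[OF Suc.prems(1)] Suc.prems(2), rule_format]])
    then show ?case
      using Suc.IH[OF _ X'] Suc.prems(1) by simp
  qed
  then show ?thesis
    using Xb \<gamma>(2) by blast
qed

lemma uniform_segment_lifts:
  fixes f :: "'a::euclidean_space \<Rightarrow> 'b::real_normed_vector"
  assumes reg: "\<And>z. \<exists>\<delta>>0. regular_near f c z \<delta>" and c: "0 < c" and \<rho>: "0 < \<rho>"
  obtains \<delta> N r where "\<And>z. z \<in> cball a (L + \<rho>) \<Longrightarrow> regular_near f c z \<delta>"
    "0 < N" "0 < r" "3 * r \<le> \<delta>" "real N * r = \<rho>"
    "\<And>x y. x \<in> cball a L \<Longrightarrow> norm (y - f x) < c * \<rho> \<Longrightarrow> \<exists>X. segment_lift f x y N r X"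
    "\<And>x y X. x \<in> cball a L \<Longrightarrow> segment_lift f x y N r X \<Longrightarrow> \<forall>k\<le>N. X k \<in> cball a (L + \<rho>)"
proof -
  obtain \<delta> where \<delta>: "0 < \<delta>" "\<And>z. z \<in> cball a (L + \<rho>) \<Longrightarrow> regular_near f c z \<delta>"
    using regular_near_uniform[of "cball a (L + \<rho>)" f c] reg by (metis compact_cball)
  obtain N where N: "0 < N" "\<rho> / real N < \<delta> / 3"
    using exists_nat_divide_less[of \<rho> "\<delta> / 3"] \<rho> \<delta> by auto
  define r where "r = \<rho> / real N"
  have r: "0 < r" "real N * r = \<rho>"
    using N \<rho> by (simp_all add: r_def)
  have r_\<delta>: "3 * r \<le> \<delta>"
    using N(2) unfolding r_def by linarith
  have cball_sub: "cball x \<rho> \<subseteq> cball a (L + \<rho>)" if "x \<in> cball a L" for x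
  proof
    fix v assume "v \<in> cball x \<rho>"
    then show "v \<in> cball a (L + \<rho>)"
      using that dist_triangle[of a v x] by simp
  qed
  have open_K: "linearly_open_on f c (cball a (L + \<rho>)) r"
    using \<delta> r_\<delta> r(1) by (intro linearly_open_on_if_regular_near) auto
  have "\<exists>X. segment_lift f x y N r X" if "x \<in> cball a L" "norm (y - f x) < c * \<rho>" for x y
  proof (rule segment_lift_exists)
    show "linearly_open_on f c (cball x (real N * r)) r"
      by (rule linearly_open_on_mono[OF open_K]) (use cball_sub[OF that(1)] r(2) in simp_all)
    show "norm (y - f x) < real N * c * r"
      using that(2) r(2) by (simp add: mult.commute mult.left_commute)
  qed (rule r(1))
  moreover have "\<forall>k\<le>N. X k \<in> cball a (L + \<rho>)"
    if "x \<in> cball a L" "segment_lift f x y N r X" for x y X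
  proof (intro allI impI)
    fix k assume "k \<le> N"
    then have "norm (X k - x) \<le> \<rho>"
      using segment_lift_dist[OF that(2)] r
      by (metis mult_right_mono of_nat_le_iff order_trans less_imp_le)
    then show "X k \<in> cball a (L + \<rho>)"
      using cball_sub[OF that(1)] by (auto simp: dist_norm norm_minus_commute)
  qed
  ultimately show ?thesis
    using that \<delta>(2) N(1) r r_\<delta> by blast
qed

lemma inj_if_regular_near:
  fixes f :: "'a::euclidean_space \<Rightarrow> 'b::real_normed_vector"
  assumes cont: "continuous_on UNIV f" and reg: "\<And>z. \<exists>\<delta>>0. regular_near f c z \<delta>" and c: "0 < c"
  shows "inj f"
proof (rule injI)
  fix a b assume fab: "f a = f b"
  define L where "L = norm (b - a)"
  have "compact ((\<lambda>x. f a - f x) ` cball a L)"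
    by (intro compact_continuous_image continuous_intros continuous_on_subset[OF cont]) auto
  then obtain B where B: "\<And>x. x \<in> cball a L \<Longrightarrow> norm (f a - f x) \<le> B"
    by (meson bounded_iff compact_imp_bounded image_eqI)
  define \<rho> where "\<rho> = (\<bar>B\<bar> + 1) / c"
  have \<rho>: "0 < \<rho>" "B < c * \<rho>"
    using c by (auto simp: \<rho>_def)
  obtain \<delta> N r where \<delta>: "\<And>z. z \<in> cball a (L + \<rho>) \<Longrightarrow> regular_near f c z \<delta>"
    and r: "0 < N" "0 < r" "3 * r \<le> \<delta>" "real N * r = \<rho>"
    and lift: "\<And>x y. x \<in> cball a L \<Longrightarrow> norm (y - f x) < c * \<rho> \<Longrightarrow> \<exists>X. segment_lift f x y N r X"
    and lift_in_K: "\<And>x y X. x \<in> cball a L \<Longrightarrow> segment_lift f x y N r X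
                      \<Longrightarrow> \<forall>k\<le>N. X k \<in> cball a (L + \<rho>)"
    by (rule uniform_segment_lifts[OF reg c \<rho>(1), of a L]) (rule that)
  have "0 < c * \<delta> / 3"
    using c r by simp
  moreover have "uniformly_continuous_on (cball a L) f"
    by (intro compact_uniformly_continuous continuous_on_subset[OF cont]) auto
  ultimately obtain \<eta> where \<eta>: "0 < \<eta>" "\<And>x x'. x \<in> cball a L \<Longrightarrow> x' \<in> cball a L
      \<Longrightarrow> norm (x - x') < \<eta> \<Longrightarrow> norm (f x - f x') < c * \<delta> / 3"
    unfolding uniformly_continuous_on_def dist_norm by metis
  have lift_a: "\<exists>X. segment_lift f x (f a) N r X" if "x \<in> cball a L" for x
    using lift[OF that] B[OF that] \<rho>(2) by (simp add: norm_minus_commute)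
  have const_lifts: "segment_lift f a (f a) N r (\<lambda>_. a)" "segment_lift f b (f a) N r (\<lambda>_. b)"
    using r fab by (simp_all add: segment_lift_def)
  have seg: "closed_segment a b \<subseteq> cball a L"
    by (intro closed_segment_subset) (auto simp: L_def dist_norm norm_minus_commute)
  have "b = a"
    by (rule segment_lift_end_along_segment[where y = "f a" and Xa = "\<lambda>_. a" and Xb = "\<lambda>_. b",
          OF \<delta> c r(2,3,1) seg lift_a lift_in_K \<eta> const_lifts])
  then show "a = b"
    by simp
qed

lemma preimage_near_if_regular_near:
  fixes f :: "'a::euclidean_space \<Rightarrow> 'b::real_normed_vector"
  assumes reg: "\<And>z. \<exists>\<delta>>0. regular_near f c z \<delta>" and c: "0 < c" and y: "norm (y - f x) < c * \<rho>"
  obtains x' where "f x' = y" "norm (x' - x) \<le> \<rho>"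
proof -
  have \<rho>: "0 < \<rho>"
    using y c norm_ge_zero[of "y - f x"] by (meson order_le_less_trans zero_less_mult_pos)
  obtain \<delta> N r where r: "0 < N" "real N * r = \<rho>"
    and lift: "\<And>x' y. x' \<in> cball x 0 \<Longrightarrow> norm (y - f x') < c * \<rho> \<Longrightarrow> \<exists>X. segment_lift f x' y N r X"
    by (rule uniform_segment_lifts[OF reg c \<rho>, of x 0]) (rule that)
  then obtain X where X: "segment_lift f x y N r X"
    using y by auto
  show ?thesis
  proof
    show "f (X N) = y"
      using segment_lift_end[OF X r(1)] .
    show "norm (X N - x) \<le> \<rho>"
      using segment_lift_dist[OF X order_refl] r(2) by simp
  qed
qed

lemma bij_inv_lipschitz_if_regular_near:
  fixes f :: "'a::euclidean_space \<Rightarrow> 'b::real_normed_vector"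
  assumes cont: "continuous_on UNIV f" and reg: "\<And>z. \<exists>\<delta>>0. regular_near f c z \<delta>" and c: "0 < c"
  shows "bij f" "norm (inv f y1 - inv f y2) \<le> norm (y1 - y2) / c"
proof -
  have inj: "inj f"
    using inj_if_regular_near[OF cont reg c] .
  have "y \<in> range f" for y
  proof -
    have "norm (y - f 0) < c * (norm (y - f 0) / c + 1)"
      using c by (simp add: field_simps)
    then show ?thesis
      using preimage_near_if_regular_near[OF reg c] by (metis rangeI)
  qed
  then have surj: "surj f"
    by blast
  then show "bij f"
    using inj by (simp add: bij_def)
  show "norm (inv f y1 - inv f y2) \<le> norm (y1 - y2) / c"
  proof (rule dense_ge)
    fix \<rho> assume \<rho>: "norm (y1 - y2) / c < \<rho>"
    have "norm (y2 - f (inv f y1)) < c * \<rho>"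
      using \<rho> c surj by (simp add: surj_f_inv_f divide_less_eq norm_minus_commute mult.commute)
    then obtain x' where "f x' = y2" "norm (x' - inv f y1) \<le> \<rho>"
      using preimage_near_if_regular_near[OF reg c] by blast
    then show "norm (inv f y1 - inv f y2) \<le> \<rho>"
      using inv_f_f[OF inj] by (metis norm_minus_commute)
  qed
qed

lemma ereal_le_divide_if_le_divide_below:
  fixes a d :: real and T :: ereal
  assumes T: "0 < T" and d: "0 \<le> d" and le: "\<And>c. 0 < c \<Longrightarrow> ereal c < T \<Longrightarrow> a \<le> d / c"
  shows "ereal a \<le> ereal d / T"
proof (cases T)
  case (real t)
  then have t: "0 < t"
    using T by simp
  have "a * t \<le> d"
  proof (cases "0 < a")
    case True
    show ?thesis
    proof (rule dense_le_bounded[of 0])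
      show "0 < a * t"
        using True t by simp
      fix w assume w: "0 < w" "w < a * t"
      then have "a \<le> d / (w / a)"
        using le[of "w / a"] True real by (simp add: field_simps)
      then show "w \<le> d"
        using w True by (simp add: field_simps)
    qed
  next
    case False
    then show ?thesis
      using t d by (meson mult_nonpos_nonneg not_less order_trans less_imp_le)
  qed
  then show ?thesis
    using real t by (simp add: pos_le_divide_eq)
next
  case PInf
  have "a \<le> 0"
  proof (rule ccontr)
    assume a: "\<not> a \<le> 0"
    then have "a \<le> d / ((d + 1) / a)"
      using le[of "(d + 1) / a"] d PInf by simp
    then show False
      using a d by (simp add: field_simps)
  qed
  then show ?thesis
    using PInf by simp
next
  case MInf
  then show ?thesis
    using T by simp
qed

lemma regular_near_if_estimators:
  fixes f :: "'a::banach \<Rightarrow> 'b::real_normed_vector" and g h :: "'a \<Rightarrow> 'a \<Rightarrow> 'b"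
  assumes cont: "continuous_on UNIV f"
    and est_g: "\<And>x. strict_estimator f (g x) (eta x) x \<and> ereal (eta x) < inj_bound (g x) x"
    and est_h: "\<And>x. strict_estimator f (h x) mu x" and mu: "0 \<le> mu"
    and c: "0 < c" "ereal c < (INF x. lop (h x) x) - ereal mu"
  shows "\<exists>\<delta>>0. regular_near f c z \<delta>"
proof -
  obtain \<delta>0 where "0 < \<delta>0" "inj_on f (ball z \<delta>0)"
    using inj_on_ball_if_injective_estimator est_g[of z] by blast
  moreover have "ereal (c + mu) < lop (h z) z"
    using c(2) INF_lower[of z UNIV "\<lambda>x. lop (h x) x"] by (simp add: ereal_less_minus)
  ultimately show ?thesis
    using regular_near_if_estimator_inj_on[OF cont est_h] c(1) mu by metis
qed

theorem mainTheorem3: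
  fixes f :: "real ^ 'n \<Rightarrow> real ^ 'n" and mu :: real
    and g h :: "real ^ 'n \<Rightarrow> real ^ 'n \<Rightarrow> real ^ 'n" and eta :: "real ^ 'n \<Rightarrow> real"
  assumes mu_nonneg: "mu \<ge> 0"
    and cont: "continuous_on UNIV f"
    and est_g: "\<And>x. eta x \<ge> 0 \<and> strict_estimator f (g x) (eta x) x
                 \<and> metrically_injective (g x) x \<and> inj_bound (g x) x > ereal (eta x)"
    and est_h: "\<And>x. strict_estimator f (h x) mu x"
    and sigma: "(INF x. lop (h x) x) > ereal mu"
  shows "bij f \<and>
    (\<forall>y1 y2. ereal (norm (inv f y1 - inv f y2))
        \<le> ereal (norm (y1 - y2)) / ((INF x. lop (h x) x) - ereal mu))"
proof -
  define \<sigma> where "\<sigma> = (INF x. lop (h x) x)"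
  have reg: "\<exists>\<delta>>0. regular_near f c z \<delta>" if "0 < c" "ereal c < \<sigma> - ereal mu" for c z
    using regular_near_if_estimators[OF cont _ est_h mu_nonneg] est_g that unfolding \<sigma>_def by blast
  have gap: "0 < \<sigma> - ereal mu"
    using sigma unfolding \<sigma>_def by (simp add: ereal_less_minus)
  then obtain c0 where "0 < c0" "ereal c0 < \<sigma> - ereal mu"
    using ereal_dense2 by force
  then have "bij f"
    using bij_inv_lipschitz_if_regular_near(1)[OF cont reg] by blast
  moreover have "ereal (norm (inv f y1 - inv f y2)) \<le> ereal (norm (y1 - y2)) / (\<sigma> - ereal mu)"
    for y1 y2
    using bij_inv_lipschitz_if_regular_near(2)[OF cont reg]
    by (intro ereal_le_divide_if_le_divide_below[OF gap]) auto
  ultimately show ?thesis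
    unfolding \<sigma>_def by blast
qed

end
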